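(* Consider $\Sigma:\ \dot x=-(A-M)x+d$ and assume $-(A-M)$ is Hurwitz. If $\Sigma$ is $\gamma$-robust for some $\gamma>0$, then for every cycle in the graph $\mathcal{G}(MA^{-1})$, its weight $w$ satisfies $w<1$ and $$\frac{1}{1-w}\le a_i\gamma$$ for every node $i$ belonging to the cycle.
   Context: Fix $N\in\mathbb{N}$. $A=\mathrm{diag}(a_1,\dots,a_N)$ with all $a_i>0$, and $M\in\mathbb{R}^{N\times N}$ has zero diagonal and nonnegative off-diagonal entries $m_{ij}=(M)_{ij}$. For $\gamma>0$, $\Sigma$ is called $\gamma$-robust if $-(A-M)$ is Hurwitz and for every bounded disturbance $d$, the solution with $x(0)=0$ satisfies $\max_{i}|x_i(t)|\le\gamma\max_i\sup_{s\ge0}|d_i(s)|$ for all $t\ge0$. The directed weighted graph $\mathcal{G}(MA^{-1})$ has vertex set $\{1,\dots,N\}$ and an edge $(p,q)$ iff $m_{pq}>0$, with weight $m_{pq}/a_q$. A walk of length $k\ge1$ from $i$ to $j$ is a sequence $(i_0,\dots,i_k)$ with $i_0=i$, $i_k=j$ and $m_{i_{l+1}i_l}>0$ for all $l$; its weight is $\prod_{l=0}^{k-1} m_{i_{l+1}i_l}/a_{i_l}$. A cycle is a walk $(i_0,\dots,i_k)$, $k\ge1$, with $i_0=i_k$ and $i_0,\dots,i_{k-1}$ pairwise distinct; its nodes are $i_0,\dots,i_{k-1}$. *)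

theory Defs
  imports "HOL-Analysis.Analysis"
begin

definition diag_mat :: "('n::finite \<Rightarrow> real) \<Rightarrow> real^'n^'n" where
  "diag_mat a = (\<chi> i j. if i = j then a i else 0)"

definition hurwitz :: "real^'n::finite^'n \<Rightarrow> bool" where
  "hurwitz B \<longleftrightarrow>
     (\<forall>z::complex. det (mat z - (\<chi> i j. complex_of_real (B $ i $ j))) = 0 \<longrightarrow> Re z < 0)"

text \<open>x is a (Caratheodory) solution on [0,oo) of x' = B x + d with x(0) = 0.\<close>
definition is_solution :: "real^'n::finite^'n \<Rightarrow> (real \<Rightarrow> real^'n) \<Rightarrow> (real \<Rightarrow> real^'n) \<Rightarrow> bool" where
  "is_solution B d x \<longleftrightarrow> x 0 = 0 \<and>
     (\<forall>t\<ge>0. ((\<lambda>s. B *v x s + d s) has_integral x t) {0..t})"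

definition gamma_robust :: "('n::finite \<Rightarrow> real) \<Rightarrow> real^'n^'n \<Rightarrow> real \<Rightarrow> bool" where
  "gamma_robust a M \<gamma> \<longleftrightarrow> hurwitz (- (diag_mat a - M)) \<and>
     (\<forall>d x c. (\<forall>s\<ge>0. \<forall>i. \<bar>d s $ i\<bar> \<le> c) \<longrightarrow> is_solution (- (diag_mat a - M)) d x \<longrightarrow>
        (\<forall>t\<ge>0. \<forall>i. \<bar>x t $ i\<bar> \<le> \<gamma> * c))"

text \<open>A cycle of length k in G(M A^{-1}), given by nodes p 0, ..., p k.\<close>
definition is_cycle :: "real^'n::finite^'n \<Rightarrow> (nat \<Rightarrow> 'n) \<Rightarrow> nat \<Rightarrow> bool" where
  "is_cycle M p k \<longleftrightarrow> k \<ge> 1 \<and> p 0 = p k \<and> inj_on p {0..<k} \<and>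
     (\<forall>l<k. M $ p (Suc l) $ p l > 0)"

definition walk_weight :: "('n::finite \<Rightarrow> real) \<Rightarrow> real^'n^'n \<Rightarrow> (nat \<Rightarrow> 'n) \<Rightarrow> nat \<Rightarrow> real" where
  "walk_weight a M p k = (\<Prod>l<k. M $ p (Suc l) $ p l / a (p l))"

end

theory Submission
  imports Defs "HOL-Number_Theory.Cong" "HOL-Real_Asymp.Real_Asymp"
begin

text \<open>Since \<open>-(A - M)\<close> is a Hurwitz Metzler matrix, \<open>(A - M) v = 1\<close> has a solution \<open>v > 0\<close>:
  the matrices \<open>A + s I - M\<close> are invertible for all \<open>s \<ge> 0\<close>, for large \<open>s\<close> the solution is positive
  by diagonal dominance, and along the homotopy it cannot leave the positive orthant because a
  nonnegative solution is automatically positive. The disturbance that makes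
  \<open>x(t) = (1 - exp (-\<epsilon> t)) v\<close> a solution stays in \<open>[0, 1]\<close> for \<open>\<epsilon> = 1 / \<parallel>v\<parallel>\<close>, so robustness gives
  \<open>v \<le> \<gamma>\<close>. Finally \<open>u = A v\<close> satisfies \<open>u\<^sub>i = 1 + \<Sum>\<^sub>j (m\<^sub>i\<^sub>j / a\<^sub>j) u\<^sub>j\<close>, so going once around a cycle
  through \<open>i\<close> gives \<open>u\<^sub>i \<ge> 1 + w u\<^sub>i\<close>, whence \<open>w < 1\<close> and \<open>1 / (1 - w) \<le> u\<^sub>i \<le> a\<^sub>i \<gamma>\<close>.\<close>

lemma diag_mat_minus_mult_vec_nth:
  fixes M :: "real^'n::finite^'n"
  shows "((diag_mat b - M) *v y) $ j = b j * y $ j - (\<Sum>m\<in>UNIV. M $ j $ m * y $ m)"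
  by (simp add: diag_mat_def matrix_vector_mult_def left_diff_distrib sum_subtractf
      if_distrib[of "\<lambda>x. x * _"] cong: if_cong)

lemma Z_matrix_nonneg_solution_pos:
  fixes M :: "real^'n::finite^'n"
  assumes M_nonneg: "\<forall>i j. M $ i $ j \<ge> 0"
    and sol: "(diag_mat b - M) *v y = (\<chi> i. 1)"
    and y_nonneg: "\<forall>j. y $ j \<ge> 0"
  shows "y $ j > 0"
proof -
  have "1 = b j * y $ j - (\<Sum>m\<in>UNIV. M $ j $ m * y $ m)"
    using arg_cong[OF sol, of "\<lambda>v. v $ j"] by (simp add: diag_mat_minus_mult_vec_nth)
  moreover have "(\<Sum>m\<in>UNIV. M $ j $ m * y $ m) \<ge> 0"
    using M_nonneg y_nonneg by (simp add: sum_nonneg)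
  ultimately have "y $ j \<noteq> 0" by auto
  with y_nonneg show ?thesis by (simp add: order_less_le)
qed

lemma diag_dominant_Z_matrix_solution_pos:
  fixes M :: "real^'n::finite^'n"
  assumes M_nonneg: "\<forall>i j. M $ i $ j \<ge> 0"
    and dominant: "\<forall>j. b j > (\<Sum>m\<in>UNIV. M $ j $ m)"
    and sol: "(diag_mat b - M) *v y = (\<chi> i. 1)"
  shows "y $ j > 0"
proof -
  have "Min (range (\<lambda>m. y $ m)) \<in> range (\<lambda>m. y $ m)" by (rule Min_in) simp_all
  then obtain j0 where "y $ j0 = Min (range (\<lambda>m. y $ m))" by (auto simp: image_iff)
  then have min_le: "y $ j0 \<le> y $ m" for m by simp
  have "1 = b j0 * y $ j0 - (\<Sum>m\<in>UNIV. M $ j0 $ m * y $ m)"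
    using arg_cong[OF sol, of "\<lambda>v. v $ j0"] by (simp add: diag_mat_minus_mult_vec_nth)
  also have "\<dots> \<le> b j0 * y $ j0 - (\<Sum>m\<in>UNIV. M $ j0 $ m * y $ j0)"
    using M_nonneg min_le by (intro diff_left_mono sum_mono mult_left_mono) auto
  also have "\<dots> = (b j0 - (\<Sum>m\<in>UNIV. M $ j0 $ m)) * y $ j0"
    by (simp add: sum_distrib_right left_diff_distrib)
  finally have "(b j0 - (\<Sum>m\<in>UNIV. M $ j0 $ m)) * y $ j0 > 0" by linarith
  then have "y $ j0 > 0"
    using dominant zero_less_mult_pos[of "b j0 - (\<Sum>m\<in>UNIV. M $ j0 $ m)" "y $ j0"] by simp
  then show ?thesis using min_le[of j] by simp
qed

lemma det_of_real_matrix: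
  fixes X :: "real^'n::finite^'n"
  shows "det (\<chi> i j. complex_of_real (X $ i $ j)) = complex_of_real (det X)"
  unfolding det_def by (simp add: of_real_sum of_real_prod)

lemma hurwitz_shift_det_nonzero:
  fixes M :: "real^'n::finite^'n"
  assumes "hurwitz (- (diag_mat a - M))" and "s \<ge> 0"
  shows "det (diag_mat (\<lambda>i. a i + s) - M) \<noteq> 0"
proof
  assume "det (diag_mat (\<lambda>i. a i + s) - M) = 0"
  moreover have "mat (complex_of_real s) - (\<chi> i j. complex_of_real ((- (diag_mat a - M)) $ i $ j))
      = (\<chi> i j. complex_of_real ((diag_mat (\<lambda>i. a i + s) - M) $ i $ j))"
    by (simp add: vec_eq_iff mat_def diag_mat_def)
  ultimately have "det (mat (complex_of_real s) - (\<chi> i j. complex_of_real ((- (diag_mat a - M)) $ i $ j))) = 0"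
    by (simp only: det_of_real_matrix of_real_eq_0_iff)
  then have "Re (complex_of_real s) < 0"
    using assms(1) unfolding hurwitz_def by blast
  with assms(2) show False by simp
qed

lemma continuous_on_Min_range:
  fixes f :: "'i::finite \<Rightarrow> 'a::topological_space \<Rightarrow> real"
  assumes "\<And>j. continuous_on S (f j)"
  shows "continuous_on S (\<lambda>s. Min (range (\<lambda>j. f j s)))"
proof -
  have "continuous_on S (\<lambda>s. Min ((\<lambda>j. f j s) ` J))" if "finite J" "J \<noteq> {}" for J
    using that by (induction J rule: finite_ne_induct) (simp_all add: assms continuous_on_min)
  then show ?thesis by simp
qed

lemma continuous_family_stays_positive:
  fixes y :: "real \<Rightarrow> real^'n::finite"
  assumes "t \<le> u"
    and cont: "\<And>j. continuous_on {t..u} (\<lambda>s. y s $ j)"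
    and pos_end: "\<forall>j. y u $ j > 0"
    and nonneg_pos: "\<And>s. s \<in> {t..u} \<Longrightarrow> \<forall>j. y s $ j \<ge> 0 \<Longrightarrow> \<forall>j. y s $ j > 0"
  shows "y t $ j > 0"
proof -
  define g where "g s = Min (range (\<lambda>j. y s $ j))" for s
  have g_le: "g s \<le> y s $ j" for s j unfolding g_def by simp
  have g_pos_iff: "g s > 0 \<longleftrightarrow> (\<forall>j. y s $ j > 0)" for s
    unfolding g_def by (simp add: Min_gr_iff)
  have "g t > 0"
  proof (rule ccontr)
    assume "\<not> g t > 0"
    then have "g t \<le> 0" by simp
    moreover have "0 \<le> g u" using pos_end g_pos_iff less_imp_le by blast
    moreover have "continuous_on {t..u} g"
      unfolding g_def by (rule continuous_on_Min_range[OF cont])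
    ultimately obtain s where s: "s \<in> {t..u}" "g s = 0"
      using IVT'[of g t 0 u] \<open>t \<le> u\<close> by auto
    then have "\<forall>j. y s $ j \<ge> 0" using g_le by metis
    then have "g s > 0" using nonneg_pos[OF s(1)] g_pos_iff by blast
    with s(2) show False by simp
  qed
  then show ?thesis using g_pos_iff by blast
qed

lemma continuous_on_det:
  fixes F :: "'a::topological_space \<Rightarrow> real^'n::finite^'n"
  assumes "\<And>i j. continuous_on S (\<lambda>s. F s $ i $ j)"
  shows "continuous_on S (\<lambda>s. det (F s))"
  unfolding det_def by (intro continuous_intros assms)

lemma hurwitz_Z_matrix_positive_solution:
  fixes a :: "'n::finite \<Rightarrow> real" and M :: "real^'n^'n"
  assumes a_pos: "\<forall>i. a i > 0"
    and M_nonneg: "\<forall>i j. M $ i $ j \<ge> 0"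
    and hurw: "hurwitz (- (diag_mat a - M))"
  shows "\<exists>v. (diag_mat a - M) *v v = (\<chi> i. 1) \<and> (\<forall>j. v $ j > 0)"
proof -
  define C where "C s = diag_mat (\<lambda>i. a i + s) - M" for s
  \<comment> \<open>Cramer's rule makes the solution of \<open>C s *v v s = 1\<close> visibly continuous in \<open>s\<close>.\<close>
  define v where "v s = (\<chi> k. det (\<chi> i j. if j = k then 1 else C s $ i $ j) / det (C s))" for s
  have det_C: "det (C s) \<noteq> 0" if "s \<ge> 0" for s
    unfolding C_def using hurw that by (rule hurwitz_shift_det_nonzero)
  have sol: "(diag_mat (\<lambda>i. a i + s) - M) *v v s = (\<chi> i. 1)" if "s \<ge> 0" for s
    unfolding C_def[symmetric] v_def by (subst cramer[OF det_C[OF that]]) (simp only: vec_lambda_beta)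
  define s0 where "s0 = (\<Sum>j\<in>UNIV. \<Sum>m\<in>UNIV. M $ j $ m)"
  have s0_nonneg: "s0 \<ge> 0"
    unfolding s0_def using M_nonneg by (auto intro: sum_nonneg)
  have row_le_s0: "(\<Sum>m\<in>UNIV. M $ j $ m) \<le> s0" for j
    unfolding s0_def using M_nonneg
    by (intro member_le_sum[of j UNIV "\<lambda>j. \<Sum>m\<in>UNIV. M $ j $ m"]) (auto intro: sum_nonneg)
  have C_cont: "continuous_on S (\<lambda>s. C s $ i $ j)" for S i j
    by (cases "i = j") (simp_all add: C_def diag_mat_def continuous_intros)
  have column_cont: "continuous_on S (\<lambda>s. if j = k then 1 else C s $ i $ j)" for S i j k
    by (cases "j = k") (simp_all add: C_cont)
  have v_cont: "continuous_on {0..s0} (\<lambda>s. v s $ k)" for k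
    unfolding v_def vec_lambda_beta using det_C
    by (intro continuous_on_divide continuous_on_det) (auto simp: C_cont column_cont)
  have "v 0 $ j > 0" for j
  proof (rule continuous_family_stays_positive[OF s0_nonneg v_cont])
    have "a j + s0 > (\<Sum>m\<in>UNIV. M $ j $ m)" for j
      using row_le_s0[of j] a_pos[rule_format, of j] by linarith
    then show "\<forall>j. v s0 $ j > 0"
      using diag_dominant_Z_matrix_solution_pos[OF M_nonneg _ sol[OF s0_nonneg]] by blast
    show "\<forall>j. v s $ j > 0" if "s \<in> {0..s0}" "\<forall>j. v s $ j \<ge> 0" for s
      using Z_matrix_nonneg_solution_pos[OF M_nonneg sol] that by auto
  qed
  with sol[of 0] show ?thesis by auto
qed

lemma is_solution_exponential_ramp:
  fixes B :: "real^'n::finite^'n"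
  shows "is_solution B (\<lambda>t. (\<epsilon> * exp (- (\<epsilon> * t))) *\<^sub>R v - (1 - exp (- (\<epsilon> * t))) *\<^sub>R (B *v v))
           (\<lambda>t. (1 - exp (- (\<epsilon> * t))) *\<^sub>R v)"
  unfolding is_solution_def
proof (intro conjI allI impI)
  fix t :: real assume "t \<ge> 0"
  have "((\<lambda>s. (\<epsilon> * exp (- (\<epsilon> * s))) *\<^sub>R v) has_integral
          (1 - exp (- (\<epsilon> * t))) *\<^sub>R v - (1 - exp (- (\<epsilon> * 0))) *\<^sub>R v) {0..t}"
  proof (rule fundamental_theorem_of_calculus[OF \<open>t \<ge> 0\<close>])
    fix s assume "s \<in> {0..t}"
    have "((\<lambda>s. 1 - exp (- (\<epsilon> * s))) has_real_derivative \<epsilon> * exp (- (\<epsilon> * s))) (at s within {0..t})"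
      by (rule derivative_eq_intros refl | simp)+
    from has_vector_derivative_scaleR[OF this has_vector_derivative_const[of v]]
    show "((\<lambda>s. (1 - exp (- (\<epsilon> * s))) *\<^sub>R v) has_vector_derivative (\<epsilon> * exp (- (\<epsilon> * s))) *\<^sub>R v)
            (at s within {0..t})" by simp
  qed
  then show "((\<lambda>s. B *v ((1 - exp (- (\<epsilon> * s))) *\<^sub>R v)
                + ((\<epsilon> * exp (- (\<epsilon> * s))) *\<^sub>R v - (1 - exp (- (\<epsilon> * s))) *\<^sub>R (B *v v)))
             has_integral (1 - exp (- (\<epsilon> * t))) *\<^sub>R v) {0..t}"
    by (simp add: matrix_vector_mult_scaleR)
qed simp

lemma gamma_robust_solution_bound:
  fixes a :: "'n::finite \<Rightarrow> real" and M :: "real^'n^'n"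
  assumes robust: "gamma_robust a M \<gamma>"
    and sol: "(diag_mat a - M) *v v = (\<chi> i. 1)"
    and v_pos: "\<forall>j. v $ j > 0"
  shows "v $ i \<le> \<gamma>"
proof -
  define \<epsilon> where "\<epsilon> = 1 / norm v"
  define e where "e t = exp (- (\<epsilon> * t))" for t
  define B where "B = - (diag_mat a - M)"
  have "v \<noteq> 0" using v_pos by (metis less_irrefl zero_index)
  then have "\<epsilon> > 0" by (simp add: \<epsilon>_def)
  have \<epsilon>_v_le: "\<epsilon> * v $ j \<le> 1" for j
    using component_le_norm_cart[of v j] v_pos \<open>v \<noteq> 0\<close> by (simp add: \<epsilon>_def divide_le_eq)
  have "B *v v = (0 - (diag_mat a - M)) *v v" by (simp add: B_def)
  also have "\<dots> = 0 *v v - (diag_mat a - M) *v v" by (rule matrix_vector_mult_diff_rdistrib)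
  also have "\<dots> = - (\<chi> i. 1)" using sol by simp
  finally have B_v: "B *v v = - (\<chi> i. 1)" .
  define d where "d t = (\<epsilon> * e t) *\<^sub>R v - (1 - e t) *\<^sub>R (B *v v)" for t
  define x where "x t = (1 - e t) *\<^sub>R v" for t
  have d_bound: "\<bar>d s $ j\<bar> \<le> 1" if "s \<ge> 0" for s j
  proof -
    have "0 < e s" "e s \<le> 1" using that \<open>\<epsilon> > 0\<close> by (auto simp: e_def)
    moreover have "e s * (\<epsilon> * v $ j) \<le> e s" using \<epsilon>_v_le[of j] \<open>0 < e s\<close> by simp
    moreover have "0 \<le> e s * (\<epsilon> * v $ j)"
      using v_pos[rule_format, of j] \<open>\<epsilon> > 0\<close> \<open>0 < e s\<close> by simp
    ultimately show ?thesis by (simp add: d_def B_v algebra_simps)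
  qed
  have "is_solution B d x"
    unfolding d_def x_def e_def by (rule is_solution_exponential_ramp)
  moreover have "\<forall>d x c. (\<forall>s\<ge>0. \<forall>i. \<bar>d s $ i\<bar> \<le> c) \<longrightarrow> is_solution B d x \<longrightarrow>
      (\<forall>t\<ge>0. \<forall>i. \<bar>x t $ i\<bar> \<le> \<gamma> * c)"
    using robust unfolding gamma_robust_def B_def by blast
  ultimately have "\<bar>(1 - e t) * v $ i\<bar> \<le> \<gamma>" if "t \<ge> 0" for t
    using d_bound that by (fastforce simp: x_def)
  moreover have "(\<lambda>n. \<bar>(1 - e (real n)) * v $ i\<bar>) \<longlonglongrightarrow> v $ i"
  proof -
    have "(\<lambda>n. e (real n)) \<longlonglongrightarrow> 0" unfolding e_def using \<open>\<epsilon> > 0\<close> by real_asymp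
    then have "(\<lambda>n. \<bar>(1 - e (real n)) * v $ i\<bar>) \<longlonglongrightarrow> \<bar>(1 - 0) * v $ i\<bar>"
      by (intro tendsto_intros)
    then show ?thesis using v_pos by (simp add: less_imp_le)
  qed
  ultimately show ?thesis by (intro LIMSEQ_le_const2) auto
qed

lemma Z_matrix_solution_edge_bound:
  fixes M :: "real^'n::finite^'n"
  assumes M_nonneg: "\<forall>i j. M $ i $ j \<ge> 0"
    and sol: "(diag_mat a - M) *v v = (\<chi> i. 1)"
    and v_nonneg: "\<forall>j. v $ j \<ge> 0"
  shows "1 + M $ j $ m * v $ m \<le> a j * v $ j"
proof -
  have "a j * v $ j = 1 + (\<Sum>m\<in>UNIV. M $ j $ m * v $ m)"
    using arg_cong[OF sol, of "\<lambda>x. x $ j"] by (simp add: diag_mat_minus_mult_vec_nth)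
  moreover have "M $ j $ m * v $ m \<le> (\<Sum>m\<in>UNIV. M $ j $ m * v $ m)"
    using M_nonneg v_nonneg by (intro member_le_sum) auto
  ultimately show ?thesis by linarith
qed

lemma affine_recurrence_lower_bound:
  fixes f b :: "nat \<Rightarrow> real"
  assumes b_nonneg: "\<And>n. b n \<ge> 0"
    and step: "\<And>n. 1 + b n * f n \<le> f (Suc n)"
  shows "1 + (\<Prod>m<Suc n. b m) * f 0 \<le> f (Suc n)"
proof (induction n)
  case 0
  then show ?case using step[of 0] by simp
next
  case (Suc n)
  have "(\<Prod>m<Suc (Suc n). b m) * f 0 \<le> b (Suc n) * (1 + (\<Prod>m<Suc n. b m) * f 0)"
    using b_nonneg[of "Suc n"] by (simp add: algebra_simps)
  also have "\<dots> \<le> b (Suc n) * f (Suc n)"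
    using Suc.IH b_nonneg by (rule mult_left_mono)
  finally show ?case using step[of "Suc n"] by linarith
qed

lemma prod_lessThan_periodic_shift:
  fixes G :: "nat \<Rightarrow> 'a::comm_monoid_mult"
  assumes periodic: "\<And>n. G (n + k) = G n"
  shows "(\<Prod>m<k. G (l + m)) = (\<Prod>m<k. G m)"
proof -
  have G_mod: "G n = G (n mod k)" for n
  proof -
    have "G (r + q * k) = G r" for r q
    proof (induction q)
      case (Suc q)
      have "G (r + Suc q * k) = G (r + q * k + k)" by (simp add: algebra_simps)
      with Suc show ?case by (simp add: periodic)
    qed simp
    then show ?thesis by (metis mod_div_mult_eq add.commute)
  qed
  have "inj_on (\<lambda>m. (l + m) mod k) {..<k}"
  proof (rule inj_onI)
    fix m m' assume "m \<in> {..<k}" "m' \<in> {..<k}" "(l + m) mod k = (l + m') mod k"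
    then show "m = m'"
      using cong_add_lcancel_nat[of l m m' k] unfolding cong_def by simp
  qed
  moreover have "(\<lambda>m. (l + m) mod k) ` {..<k} \<subseteq> {..<k}"
    by (cases "k = 0") auto
  ultimately have "bij_betw (\<lambda>m. (l + m) mod k) {..<k} {..<k}"
    by (simp add: bij_betw_def endo_inj_surj)
  then have "(\<Prod>m<k. G m) = (\<Prod>m<k. G ((l + m) mod k))"
    by (rule prod.reindex_bij_betw[symmetric])
  also have "\<dots> = (\<Prod>m<k. G (l + m))" using G_mod by simp
  finally show ?thesis ..
qed

lemma cycle_weight_Z_matrix_solution_bound:
  fixes a :: "'n::finite \<Rightarrow> real" and M :: "real^'n^'n"
  assumes a_pos: "\<forall>i. a i > 0"
    and M_nonneg: "\<forall>i j. M $ i $ j \<ge> 0"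
    and sol: "(diag_mat a - M) *v v = (\<chi> i. 1)"
    and v_nonneg: "\<forall>j. v $ j \<ge> 0"
    and cyc: "is_cycle M p k"
    and "l < k"
  shows "1 + walk_weight a M p k * (a (p l) * v $ p l) \<le> a (p l) * v $ p l"
proof -
  from cyc have "k \<ge> 1" and closed: "p k = p 0" by (auto simp: is_cycle_def)
  define P where "P n = p (n mod k)" for n
  define \<beta> where "\<beta> n = M $ P (Suc n) $ P n / a (P n)" for n
  define u where "u j = a j * v $ j" for j
  have P_Suc: "P (Suc n) = p (Suc (n mod k))" for n
    unfolding P_def using closed by (simp add: mod_Suc)
  have P_on_cycle: "P m = p m" "P (Suc m) = p (Suc m)" if "m < k" for m
    using that P_Suc[of m] by (simp_all add: P_def)
  have \<beta>_nonneg: "\<beta> n \<ge> 0" for n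
    unfolding \<beta>_def using M_nonneg a_pos by (simp add: less_imp_le)
  have \<beta>_periodic: "\<beta> (n + k) = \<beta> n" for n
    unfolding \<beta>_def P_def by (simp only: add_Suc[symmetric] mod_add_self2)
  have weight: "(\<Prod>m<k. \<beta> m) = walk_weight a M p k"
    unfolding walk_weight_def \<beta>_def by (intro prod.cong) (simp_all add: P_on_cycle)
  have step: "1 + \<beta> n * u (P n) \<le> u (P (Suc n))" for n
  proof -
    have "\<beta> n * u (P n) = M $ P (Suc n) $ P n * v $ P n"
      unfolding \<beta>_def u_def using a_pos[rule_format, of "P n"] by simp
    then show ?thesis
      unfolding u_def using Z_matrix_solution_edge_bound[OF M_nonneg sol v_nonneg, of "P (Suc n)" "P n"]
      by linarith
  qed
  obtain n where k: "k = Suc n" using \<open>k \<ge> 1\<close> by (cases k) auto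
  have "1 + (\<Prod>m<k. \<beta> (l + m)) * u (P l) \<le> u (P (l + k))"
    using affine_recurrence_lower_bound[of "\<lambda>m. \<beta> (l + m)" "\<lambda>m. u (P (l + m))" n] \<beta>_nonneg step k
    by simp
  moreover have "P (l + k) = p l" "P l = p l" using \<open>l < k\<close> by (simp_all add: P_def)
  ultimately show ?thesis
    using prod_lessThan_periodic_shift[of \<beta> k l, OF \<beta>_periodic] weight by (simp add: u_def)
qed

theorem mainTheorem3:
  fixes a :: "'n::finite \<Rightarrow> real" and M :: "real^'n^'n" and \<gamma> :: real
  assumes a_pos: "\<forall>i. a i > 0"
    and M_diag: "\<forall>i. M $ i $ i = 0"
    and M_nonneg: "\<forall>i j. M $ i $ j \<ge> 0"
    and hurw: "hurwitz (- (diag_mat a - M))"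
    and gamma_pos: "\<gamma> > 0"
    and robust: "gamma_robust a M \<gamma>"
    and cyc: "is_cycle M p k"
  shows "walk_weight a M p k < 1 \<and>
         (\<forall>l<k. 1 / (1 - walk_weight a M p k) \<le> a (p l) * \<gamma>)"
proof -
  obtain v where sol: "(diag_mat a - M) *v v = (\<chi> i. 1)" and v_pos: "\<forall>j. v $ j > 0"
    using hurwitz_Z_matrix_positive_solution[OF a_pos M_nonneg hurw] by blast
  define w where "w = walk_weight a M p k"
  have bound: "w < 1 \<and> 1 / (1 - w) \<le> a (p l) * \<gamma>" if "l < k" for l
  proof -
    define u where "u = a (p l) * v $ p l"
    have "u > 0" unfolding u_def using a_pos v_pos by simp
    have "1 + w * u \<le> u"
      unfolding u_def w_def using v_pos that
      by (intro cycle_weight_Z_matrix_solution_bound[OF a_pos M_nonneg sol _ cyc]) (simp_all add: less_imp_le)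
    then have "1 \<le> (1 - w) * u" by (simp add: algebra_simps)
    with \<open>u > 0\<close> have "w < 1" using zero_less_mult_pos2[of "1 - w" u] by linarith
    with \<open>1 \<le> (1 - w) * u\<close> have "1 / (1 - w) \<le> u" by (simp add: pos_divide_le_eq mult.commute)
    moreover have "u \<le> a (p l) * \<gamma>"
      unfolding u_def using gamma_robust_solution_bound[OF robust sol v_pos] a_pos by simp
    ultimately show ?thesis using \<open>w < 1\<close> by linarith
  qed
  moreover have "0 < k" using cyc by (simp add: is_cycle_def)
  ultimately show ?thesis unfolding w_def by blast
qed

end
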